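(* Let $A$ be a complex square matrix, $y$ a complex vector, and $k,m\ge1$ integers. Suppose there is a polynomial $P$ of degree at most $k$ with $P(0)=0$ such that the Hermitian part $H=\tfrac12(P(A)^*+P(A))$ of $P(A)$ is positive definite or negative definite. Consider an operator coefficient method of degree $k$ and order $m$ (an iteration producing $x_0,x_1,x_2,\ldots$) whose selection criterion chooses $x_{n+1}$ to minimize the $2$-norm of the residual $\|r_{n+1}\|_2$ (respectively of the error $\|e_{n+1}\|_2$) over its selection set, and whose selection set at each step contains the affine space $$x_n+\operatorname{span}\{r_n,\;Ar_n,\;A^2r_n,\;\ldots,\;A^{k-1}r_n\}.$$ Then the method converges, and at each step the minimized norm declines by at least the factor $$\sqrt{1-\left[\frac{\min|\lambda(H)|}{\|P(A)\|_2}\right]^2}<1,$$ i.e. $\|r_{n+1}\|_2\le \rho\|r_n\|_2$ (respectively $\|e_{n+1}\|_2\le\rho\|e_n\|_2$) with $\rho$ equal to this factor.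
   Context: For an iterate $x_j$, $r_j=y-Ax_j$ is its residual and $e_j=x_*-x_j$ its error, $x_*$ being the exact solution of $Ax=y$. $\lambda(H)$ is the set of eigenvalues of $H$; $\|\cdot\|_2$ is the Euclidean norm and induced matrix norm. An operator coefficient method of degree $k$ and order $m$, oc$(k,m)$, starts from $x_0$ (and optionally $x_{-1},\ldots,x_{1-m}$) and at each step chooses the next iterate, by some selection criterion, from a selection set that is a subset of the span of the vectors $x_{n},x_{n-1},\ldots,x_{n+1-m}$ and $A^{i}r_{n+1-j}$ for $0\le i\le k-1$, $1\le j\le m$ (in the homogeneous case with the coefficients of the $x$-vectors constrained to sum to $1$); the selection set need not use all of these vectors. *)

theory Defs
  imports "HOL-Analysis.Analysis" "HOL-Computational_Algebra.Polynomial"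
begin

text \<open>Complex n x n matrices are \<open>complex^'n^'n\<close>, vectors are \<open>complex^'n\<close>
  (the norm on \<open>complex^'n\<close> is the Euclidean 2-norm).\<close>

primrec mat_pow :: "complex^'n^'n \<Rightarrow> nat \<Rightarrow> complex^'n^'n" where
  "mat_pow A 0 = mat 1"
| "mat_pow A (Suc d) = A ** mat_pow A d"

definition poly_mat :: "complex poly \<Rightarrow> complex^'n^'n \<Rightarrow> complex^'n^'n" where
  "poly_mat P A = (\<chi> i j. \<Sum>d\<le>degree P. coeff P d * (mat_pow A d) $ i $ j)"

definition cadjoint :: "complex^'n^'n \<Rightarrow> complex^'n^'n" where
  "cadjoint M = (\<chi> i j. cnj (M $ j $ i))"

definition herm_part :: "complex^'n^'n \<Rightarrow> complex^'n^'n" where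
  "herm_part M = (\<chi> i j. (cadjoint M $ i $ j + M $ i $ j) / 2)"

definition qform :: "complex^'n^'n \<Rightarrow> complex^'n \<Rightarrow> complex" where
  "qform M x = (\<Sum>i\<in>UNIV. cnj (x $ i) * (M *v x) $ i)"

definition hermitian :: "complex^'n^'n \<Rightarrow> bool" where
  "hermitian M \<longleftrightarrow> cadjoint M = M"

definition pos_definite :: "complex^'n^'n \<Rightarrow> bool" where
  "pos_definite M \<longleftrightarrow> hermitian M \<and> (\<forall>x. x \<noteq> 0 \<longrightarrow> qform M x \<in> \<real> \<and> Re (qform M x) > 0)"

definition neg_definite :: "complex^'n^'n \<Rightarrow> bool" where
  "neg_definite M \<longleftrightarrow> hermitian M \<and> (\<forall>x. x \<noteq> 0 \<longrightarrow> qform M x \<in> \<real> \<and> Re (qform M x) < 0)"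

definition eigenvalues :: "complex^'n^'n \<Rightarrow> complex set" where
  "eigenvalues M = {l. \<exists>v. v \<noteq> 0 \<and> M *v v = l *s v}"

definition mat_norm2 :: "complex^'n^'n \<Rightarrow> real" where
  "mat_norm2 M = onorm (\<lambda>v. M *v v)"

definition residual :: "complex^'n^'n \<Rightarrow> complex^'n \<Rightarrow> complex^'n \<Rightarrow> complex^'n" where
  "residual A y z = y - A *v z"

definition krylov_affine :: "complex^'n^'n \<Rightarrow> nat \<Rightarrow> complex^'n \<Rightarrow> complex^'n \<Rightarrow> (complex^'n) set" where
  "krylov_affine A k x r = {x + (\<Sum>i<k. c i *s (mat_pow A i *v r)) | c :: nat \<Rightarrow> complex. True}"

text \<open>Admissible selection set of an oc(k,m) method at step n (iterates indexed by integers,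
  so that the optional starting vectors x_{-1},...,x_{1-m} are available): complex span of
  \<open>x_n,...,x_{n+1-m}\<close> and \<open>A^i r_{n+1-j}\<close> for \<open>0\<le>i\<le>k-1\<close>, \<open>1\<le>j\<le>m\<close>.\<close>
definition oc_span :: "complex^'n^'n \<Rightarrow> complex^'n \<Rightarrow> nat \<Rightarrow> nat \<Rightarrow> (int \<Rightarrow> complex^'n) \<Rightarrow> int \<Rightarrow> (complex^'n) set" where
  "oc_span A y k m x n =
     {(\<Sum>j<m. a j *s x (n - int j)) + (\<Sum>j\<in>{1..m}. \<Sum>i<k. b i j *s (mat_pow A i *v residual A y (x (n + 1 - int j))))
       | (a :: nat \<Rightarrow> complex) (b :: nat \<Rightarrow> nat \<Rightarrow> complex). True}"

end

theory Submission imports Defs begin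

text \<open>Write \<open>\<langle>v,w\<rangle> = Re (v\<^sup>* w)\<close> and \<open>P = X Q\<close>, so \<open>P(A) = A Q(A) = Q(A) A\<close>. The point
  \<open>x\<^sub>n + t Q(A) r\<^sub>n\<close> of the Krylov space has residual \<open>r\<^sub>n - t P(A) r\<^sub>n\<close> and error
  \<open>e\<^sub>n - t P(A) e\<^sub>n\<close>. Since \<open>\<langle>v, P(A) v\<rangle> = \<langle>v, H v\<rangle>\<close> and the minimum of the Rayleigh quotient
  of the definite matrix \<open>\<plusminus>H\<close> is its eigenvalue of least modulus \<open>\<mu>\<close>, we have
  \<open>|\<langle>v, P(A) v\<rangle>| \<ge> \<mu> \<parallel>v\<parallel>\<^sup>2\<close>, while \<open>\<parallel>P(A) v\<parallel> \<le> \<parallel>P(A)\<parallel> \<parallel>v\<parallel>\<close>; the optimal real step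
  \<open>t = \<langle>v, P(A) v\<rangle> / \<parallel>P(A) v\<parallel>\<^sup>2\<close> then gives \<open>\<parallel>v - t P(A) v\<parallel> \<le> \<rho> \<parallel>v\<parallel>\<close>. Minimality of the
  selected iterate transfers this bound, so the minimised norms decay geometrically; for the
  residual criterion the iterates still converge because \<open>A\<close> is injective, \<open>P(A)\<close> being so.\<close>

lemma matrix_vector_mult_scaleR_complex:
  "(K::complex^'n^'m) *v (r *\<^sub>R v) = r *\<^sub>R (K *v v)"
  using matrix_vector_mul_linear[of K] by (simp add: linear_scale)

lemma matrix_vector_mult_uminus_left: "(- K::complex^'n^'m) *v v = - (K *v v)"
  by (simp add: vec_eq_iff matrix_vector_mult_def sum_negf)

lemma scaleR_eq_of_real_smult: "r *\<^sub>R (v::complex^'n) = complex_of_real r *s v"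
  unfolding vec_eq_iff vector_scaleR_component vector_smult_component by (simp add: scaleR_conv_of_real)

lemma inner_complex_eq_Re_cnj: "inner (a::complex) b = Re (cnj a * b)"
  by (simp add: inner_complex_def)

lemma inner_smult_self: "inner v (l *s (v::complex^'n)) = Re l * inner v v"
proof -
  have "inner z (l * z) = Re l * inner z z" for z :: complex
    by (simp add: inner_complex_def algebra_simps)
  then show ?thesis by (simp add: inner_vec_def sum_distrib_left)
qed

lemma inner_cadjoint: "inner u (cadjoint K *v w) = inner ((K::complex^'n^'n) *v u) w"
proof -
  have "inner u (cadjoint K *v w) = (\<Sum>i\<in>UNIV. \<Sum>j\<in>UNIV. Re (cnj (u$i) * (cnj (K$j$i) * w$j)))"
    by (simp add: inner_vec_def inner_complex_eq_Re_cnj cadjoint_def matrix_vector_mult_def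
        sum_distrib_left Re_sum)
  also have "\<dots> = (\<Sum>j\<in>UNIV. \<Sum>i\<in>UNIV. Re (cnj (u$i) * (cnj (K$j$i) * w$j)))"
    by (rule sum.swap)
  also have "\<dots> = (\<Sum>j\<in>UNIV. Re (cnj (\<Sum>i\<in>UNIV. K$j$i * u$i) * w$j))"
    unfolding cnj_sum sum_distrib_right Re_sum
    by (intro sum.cong refl) (simp add: mult.commute mult.left_commute)
  also have "\<dots> = inner (K *v u) w"
    by (simp add: inner_vec_def inner_complex_eq_Re_cnj matrix_vector_mult_def)
  finally show ?thesis .
qed

lemma hermitian_inner_commute:
  "hermitian H \<Longrightarrow> inner u ((H::complex^'n^'n) *v w) = inner (H *v u) w"
  by (metis hermitian_def inner_cadjoint)

lemma Re_qform: "Re (qform K v) = inner v ((K::complex^'n^'n) *v v)"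
  by (simp add: qform_def inner_vec_def inner_complex_eq_Re_cnj Re_sum)

lemma pos_definite_inner_pos:
  "pos_definite H \<Longrightarrow> v \<noteq> 0 \<Longrightarrow> inner v ((H::complex^'n^'n) *v v) > 0"
  by (metis pos_definite_def Re_qform)

lemma neg_definite_uminus: "neg_definite H \<Longrightarrow> pos_definite (- (H::complex^'n^'n))"
  by (auto simp: neg_definite_def pos_definite_def hermitian_def cadjoint_def vec_eq_iff qform_def
      matrix_vector_mult_uminus_left sum_negf)

lemma herm_part_mult_vector:
  "herm_part K *v v = (1/2::real) *\<^sub>R (cadjoint K *v v + (K::complex^'n^'n) *v v)"
  unfolding vec_eq_iff vector_scaleR_component vector_add_component
  by (simp add: herm_part_def matrix_vector_mult_def scaleR_conv_of_real
      sum_divide_distrib[symmetric] sum.distrib add_divide_distrib distrib_right)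

lemma inner_herm_part: "inner v (herm_part K *v v) = inner v ((K::complex^'n^'n) *v v)"
  by (simp add: herm_part_mult_vector inner_add_right inner_cadjoint inner_commute)

lemma eigenvaluesI: "v \<noteq> 0 \<Longrightarrow> H *v v = l *s v \<Longrightarrow> l \<in> eigenvalues H"
  unfolding eigenvalues_def by auto

lemma eigenvaluesE:
  assumes "l \<in> eigenvalues H"
  obtains v where "v \<noteq> 0" "H *v v = l *s v"
  using assms unfolding eigenvalues_def by auto

lemma eigenvalues_uminus: "eigenvalues (- H) = uminus ` eigenvalues (H::complex^'n^'n)"
proof (rule set_eqI, rule iffI)
  fix l assume "l \<in> eigenvalues (- H)"
  then obtain v where "v \<noteq> 0" "(- H) *v v = l *s v" by (auto simp: eigenvalues_def)
  then have "H *v v = (- l) *s v" by (metis matrix_vector_mult_uminus_left vector_smult_lneg minus_minus)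
  with \<open>v \<noteq> 0\<close> show "l \<in> uminus ` eigenvalues H"
    by (auto simp: eigenvalues_def image_iff intro!: exI[of _ "-l"])
next
  fix l assume "l \<in> uminus ` eigenvalues H"
  then show "l \<in> eigenvalues (- H)"
    by (auto simp: eigenvalues_def matrix_vector_mult_uminus_left vector_smult_lneg)
qed

lemma quadratic_nonneg_imp_linear_coeff_zero:
  fixes a b :: real
  assumes "\<And>t. 0 \<le> a * t + b * t\<^sup>2"
  shows "a = 0"
proof (rule ccontr)
  assume "a \<noteq> 0"
  define c where "c = \<bar>b\<bar> + 1"
  have c: "c > 0" "b \<le> c - 1" unfolding c_def by auto
  have "0 \<le> a * (- a / c) + b * (- a / c)\<^sup>2" by (rule assms)
  also have "\<dots> = a\<^sup>2 * (b - c) / c\<^sup>2"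
    using c by (simp add: field_simps power2_eq_square)
  also have "\<dots> < 0"
    using c \<open>a \<noteq> 0\<close> by (intro divide_neg_pos mult_pos_neg) auto
  finally show False by simp
qed

lemma inner_ge_of_sphere:
  fixes H :: "complex^'n^'n"
  assumes "\<And>w. w \<in> sphere 0 1 \<Longrightarrow> c \<le> inner w (H *v w)"
  shows "c * inner v v \<le> inner v (H *v v)"
proof (cases "v = 0")
  case False
  have "c \<le> inner (inverse (norm v) *\<^sub>R v) (H *v (inverse (norm v) *\<^sub>R v))"
    using False by (intro assms) simp
  also have "\<dots> = inner v (H *v v) / (norm v)\<^sup>2"
    by (simp add: matrix_vector_mult_scaleR_complex power2_eq_square divide_inverse)
  finally show ?thesis
    using False by (simp add: field_simps power2_norm_eq_inner)
qed simp

text \<open>The excess \<open>\<langle>w,Hw\<rangle> - \<mu>\<langle>w,w\<rangle>\<close> is a non-negative quadratic form vanishing at \<open>v\<^sub>0\<close>, so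
  its derivative \<open>2 \<parallel>d\<parallel>\<^sup>2\<close> at \<open>v\<^sub>0\<close> in the direction \<open>d = Hv\<^sub>0 - \<mu>v\<^sub>0\<close> vanishes.\<close>
lemma hermitian_rayleigh_minimiser_eigenvector:
  fixes H :: "complex^'n^'n"
  assumes herm: "hermitian H"
    and lb: "\<And>w. \<mu> * inner w w \<le> inner w (H *v w)"
    and eq: "inner v0 (H *v v0) = \<mu> * inner v0 v0"
  shows "H *v v0 = complex_of_real \<mu> *s v0"
proof -
  define \<phi> where "\<phi> w = inner w (H *v w) - \<mu> * inner w w" for w
  define d where "d = H *v v0 - \<mu> *\<^sub>R v0"
  have expand: "\<phi> (v0 + t *\<^sub>R d) = (2 * inner d d) * t + \<phi> d * t\<^sup>2" for t
  proof -
    have "\<phi> (v0 + t *\<^sub>R d) = \<phi> v0 + t * (inner (H *v v0) d + inner d (H *v v0) - 2 * \<mu> * inner v0 d)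
        + \<phi> d * t\<^sup>2"
      unfolding \<phi>_def
      by (simp add: matrix_vector_right_distrib matrix_vector_mult_scaleR_complex inner_add_left
          inner_add_right hermitian_inner_commute[OF herm, of v0 d] power2_eq_square algebra_simps
          inner_commute[of d v0])
    also have "inner (H *v v0) d + inner d (H *v v0) - 2 * \<mu> * inner v0 d = 2 * inner d d"
      unfolding d_def by (simp add: inner_commute algebra_simps)
    finally show ?thesis using eq by (simp add: \<phi>_def)
  qed
  have "0 \<le> \<phi> w" for w using lb[of w] by (simp add: \<phi>_def)
  then have "2 * inner d d = 0"
    by (intro quadratic_nonneg_imp_linear_coeff_zero[of _ "\<phi> d"]) (simp flip: expand)
  then show ?thesis by (simp add: d_def scaleR_eq_of_real_smult)
qed

lemma pos_definite_min_eigenvalue: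
  fixes H :: "complex^'n^'n"
  assumes pd: "pos_definite H"
  shows "\<exists>\<mu>>0. complex_of_real \<mu> \<in> eigenvalues H \<and> (\<forall>v. \<mu> * inner v v \<le> inner v (H *v v))"
proof -
  have "continuous_on (sphere 0 1) (\<lambda>w. inner w (H *v w))"
    by (intro continuous_intros linear_continuous_on matrix_vector_mul_bounded_linear)
  moreover have "sphere (0::complex^'n) 1 \<noteq> {}" by simp
  ultimately obtain v0 where v0: "v0 \<in> sphere 0 1"
    and min: "\<And>w. w \<in> sphere 0 1 \<Longrightarrow> inner v0 (H *v v0) \<le> inner w (H *v w)"
    using continuous_attains_inf[OF compact_sphere] by blast
  define \<mu> where "\<mu> = inner v0 (H *v v0)"
  have "v0 \<noteq> 0" using v0 by auto
  have lb: "\<mu> * inner v v \<le> inner v (H *v v)" for v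
    unfolding \<mu>_def by (rule inner_ge_of_sphere[OF min])
  have "inner v0 v0 = 1" using v0 by (simp flip: power2_norm_eq_inner)
  then have "H *v v0 = complex_of_real \<mu> *s v0"
    using pd lb by (intro hermitian_rayleigh_minimiser_eigenvector) (auto simp: pos_definite_def \<mu>_def)
  then have "complex_of_real \<mu> \<in> eigenvalues H"
    using \<open>v0 \<noteq> 0\<close> by (intro eigenvaluesI)
  moreover have "\<mu> > 0" unfolding \<mu>_def using pos_definite_inner_pos[OF pd \<open>v0 \<noteq> 0\<close>] .
  ultimately show ?thesis using lb by (intro exI[of _ \<mu>]) simp
qed

lemma pos_definite_coercive:
  fixes H :: "complex^'n^'n"
  assumes "pos_definite H"
  shows "\<exists>\<mu>>0. Inf (cmod ` eigenvalues H) = \<mu> \<and> (\<forall>v. \<mu> * (norm v)\<^sup>2 \<le> inner v (H *v v))"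
proof -
  obtain \<mu> where \<mu>: "\<mu> > 0" "complex_of_real \<mu> \<in> eigenvalues H"
    and lb: "\<And>v. \<mu> * inner v v \<le> inner v (H *v v)"
    using pos_definite_min_eigenvalue[OF assms] by auto
  have bound: "\<mu> \<le> cmod l" if l: "l \<in> eigenvalues H" for l
  proof -
    obtain v where v: "v \<noteq> 0" "H *v v = l *s v" using l by (rule eigenvaluesE)
    then have "\<mu> * inner v v \<le> Re l * inner v v" using lb[of v] by (simp add: inner_smult_self)
    then have "\<mu> \<le> Re l" using v by (simp add: mult_right_le_imp_le)
    then show ?thesis using abs_Re_le_cmod[of l] by linarith
  qed
  have "\<mu> \<in> cmod ` eigenvalues H" using \<mu> by (force simp: image_iff)
  then have "Inf (cmod ` eigenvalues H) = \<mu>"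
    by (rule cInf_eq_minimum) (use bound in auto)
  moreover have "\<mu> * (norm v)\<^sup>2 \<le> inner v (H *v v)" for v
    using lb[of v] by (simp only: power2_norm_eq_inner)
  ultimately show ?thesis using \<mu> by (auto intro!: exI[of _ \<mu>])
qed

lemma definite_coercive:
  fixes H :: "complex^'n^'n"
  assumes "pos_definite H \<or> neg_definite H"
  shows "\<exists>\<mu>>0. Inf (cmod ` eigenvalues H) = \<mu> \<and> (\<forall>v. \<mu> * (norm v)\<^sup>2 \<le> \<bar>inner v (H *v v)\<bar>)"
  using assms
proof
  assume "pos_definite H"
  then obtain \<mu> where "\<mu> > 0" "Inf (cmod ` eigenvalues H) = \<mu>"
    and lb: "\<forall>v. \<mu> * (norm v)\<^sup>2 \<le> inner v (H *v v)"
    using pos_definite_coercive[OF \<open>pos_definite H\<close>] by auto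
  moreover have "\<mu> * (norm v)\<^sup>2 \<le> \<bar>inner v (H *v v)\<bar>" for v
    using lb by (meson abs_ge_self order_trans)
  ultimately show ?thesis by (auto intro!: exI[of _ \<mu>])
next
  assume "neg_definite H"
  then obtain \<mu> where "\<mu> > 0" "Inf (cmod ` eigenvalues (- H)) = \<mu>"
    and lb: "\<forall>v. \<mu> * (norm v)\<^sup>2 \<le> inner v ((- H) *v v)"
    using pos_definite_coercive[OF neg_definite_uminus[OF \<open>neg_definite H\<close>]] by auto
  moreover have "cmod ` eigenvalues (- H) = cmod ` eigenvalues H"
    by (simp add: eigenvalues_uminus image_image)
  moreover have "\<mu> * (norm v)\<^sup>2 \<le> \<bar>inner v (H *v v)\<bar>" for v
    using lb[rule_format, of v] abs_ge_minus_self order_trans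
    by (metis inner_minus_right matrix_vector_mult_uminus_left)
  ultimately show ?thesis by (auto intro!: exI[of _ \<mu>])
qed

lemma exists_scaleR_contraction:
  fixes u v :: "'a::real_inner"
  assumes \<mu>: "0 \<le> \<mu>" "\<mu> \<le> N"
    and lb: "\<mu> * (norm v)\<^sup>2 \<le> \<bar>inner v u\<bar>" and ub: "norm u \<le> N * norm v"
  shows "\<exists>t. norm (v - t *\<^sub>R u) \<le> sqrt (1 - (\<mu> / N)\<^sup>2) * norm v"
proof (cases "u = 0")
  case True
  with lb \<mu> have "\<mu> = 0 \<or> v = 0" by (simp add: mult_le_0_iff disj_commute)
  then show ?thesis by (auto intro: exI[of _ 0])
next
  case False
  then have "0 < N * norm v" using ub by (meson norm_le_zero_iff not_less order_trans)
  then have v: "norm v > 0" and N: "N > 0" by (simp_all add: zero_less_mult_iff)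
  have q: "(\<mu> / N)\<^sup>2 \<le> 1" using \<mu> N by (simp add: power_le_one)
  define t where "t = inner v u / (norm u)\<^sup>2"
  have "(norm (v - t *\<^sub>R u))\<^sup>2 = (norm v)\<^sup>2 - (inner v u)\<^sup>2 / (norm u)\<^sup>2"
    using False unfolding power2_norm_eq_inner t_def
    by (simp add: inner_diff_left inner_diff_right inner_commute field_simps power2_eq_square)
  moreover have "(\<mu> / N)\<^sup>2 * (norm v)\<^sup>2 \<le> (inner v u)\<^sup>2 / (norm u)\<^sup>2"
  proof -
    have "(\<mu> / N)\<^sup>2 * (norm v)\<^sup>2 = (\<mu> * (norm v)\<^sup>2)\<^sup>2 / (N * norm v)\<^sup>2"
      using v N by (simp add: field_simps power2_eq_square)
    also have "\<dots> \<le> (inner v u)\<^sup>2 / (norm u)\<^sup>2"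
      using power_mono[OF lb, of 2] \<mu> ub False by (intro frac_le) (auto intro!: power_mono)
    finally show ?thesis .
  qed
  ultimately have "(norm (v - t *\<^sub>R u))\<^sup>2 \<le> (norm v)\<^sup>2 - (\<mu> / N)\<^sup>2 * (norm v)\<^sup>2"
    by linarith
  also have "\<dots> = (sqrt (1 - (\<mu> / N)\<^sup>2))\<^sup>2 * (norm v)\<^sup>2"
    using q by (simp add: left_diff_distrib)
  finally have "(norm (v - t *\<^sub>R u))\<^sup>2 \<le> (sqrt (1 - (\<mu> / N)\<^sup>2) * norm v)\<^sup>2"
    by (simp only: power_mult_distrib)
  then have "norm (v - t *\<^sub>R u) \<le> sqrt (1 - (\<mu> / N)\<^sup>2) * norm v"
    by (rule power2_le_imp_le) (use q in simp)
  then show ?thesis ..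
qed

lemma herm_part_definite_contraction:
  fixes M :: "complex^'n^'n"
  assumes "pos_definite (herm_part M) \<or> neg_definite (herm_part M)"
  defines "\<rho> \<equiv> sqrt (1 - (Inf (cmod ` eigenvalues (herm_part M)) / mat_norm2 M)\<^sup>2)"
  shows "0 \<le> \<rho>" and "\<rho> < 1"
    and "\<exists>t::real. norm (v - t *\<^sub>R (M *v v)) \<le> \<rho> * norm v"
    and "M *v v = 0 \<Longrightarrow> v = 0"
proof -
  obtain \<mu> where \<mu>: "\<mu> > 0" "Inf (cmod ` eigenvalues (herm_part M)) = \<mu>"
    and lb: "\<And>v. \<mu> * (norm v)\<^sup>2 \<le> \<bar>inner v (M *v v)\<bar>"
    using definite_coercive[OF assms(1)] by (auto simp: inner_herm_part)
  define N where "N = mat_norm2 M"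
  have ub: "norm (M *v v) \<le> N * norm v" for v
    unfolding N_def mat_norm2_def by (rule onorm[OF matrix_vector_mul_bounded_linear])
  obtain v1 :: "complex^'n" where "norm v1 = 1" using vector_choose_size zero_le_one by blast
  then have "\<mu> \<le> N"
    using lb[of v1] Cauchy_Schwarz_ineq2[of v1 "M *v v1"] ub[of v1] by simp
  then have q: "0 < \<mu> / N" "(\<mu> / N)\<^sup>2 \<le> 1" using \<mu> by (auto simp: power_le_one)
  have \<rho>: "\<rho> = sqrt (1 - (\<mu> / N)\<^sup>2)" unfolding \<rho>_def \<mu> N_def ..
  show "0 \<le> \<rho>" "\<rho> < 1" unfolding \<rho> using q \<mu> \<open>\<mu> \<le> N\<close> by simp_all
  show "\<exists>t::real. norm (v - t *\<^sub>R (M *v v)) \<le> \<rho> * norm v"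
    unfolding \<rho> using \<mu> \<open>\<mu> \<le> N\<close> lb ub by (intro exists_scaleR_contraction) simp_all
  show "v = 0" if "M *v v = 0"
    using lb[of v] \<mu>(1) that by (simp add: mult_le_0_iff)
qed

lemma mat_pow_commute: "mat_pow A d ** A = A ** mat_pow A d"
  by (induction d) (simp_all add: matrix_mul_assoc[symmetric])

lemma matrix_vector_mult_sum: "(K::complex^'n^'m) *v sum f S = (\<Sum>i\<in>S. K *v f i)"
  by (induct S rule: infinite_finite_induct) (simp_all add: matrix_vector_right_distrib)

lemma vector_smult_sum: "(c::complex) *s sum f S = (\<Sum>i\<in>S. c *s f i)"
  by (simp add: vec_eq_iff sum_component sum_distrib_left)

lemma poly_mat_mult_vector:
  "poly_mat P A *v v = (\<Sum>d\<le>degree P. coeff P d *s (mat_pow A d *v (v::complex^'n)))"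
proof -
  have "(poly_mat P A *v v) $ i = (\<Sum>d\<le>degree P. coeff P d *s (mat_pow A d *v v)) $ i" for i
  proof -
    have "(poly_mat P A *v v) $ i = (\<Sum>j\<in>UNIV. \<Sum>d\<le>degree P. coeff P d * mat_pow A d $ i $ j * v $ j)"
      by (simp add: matrix_vector_mult_def poly_mat_def sum_distrib_right)
    also have "\<dots> = (\<Sum>d\<le>degree P. \<Sum>j\<in>UNIV. coeff P d * mat_pow A d $ i $ j * v $ j)"
      by (rule sum.swap)
    also have "\<dots> = (\<Sum>d\<le>degree P. coeff P d *s (mat_pow A d *v v)) $ i"
      by (simp add: sum_component matrix_vector_mult_def sum_distrib_left mult.assoc)
    finally show ?thesis .
  qed
  then show ?thesis by (simp add: vec_eq_iff)
qed

text \<open>\<open>Q(A) v\<close> for \<open>Q = P / X\<close>, written with the first \<open>k\<close> coefficients of \<open>P / X\<close>.\<close>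
definition poly_div_X_mult :: "complex poly \<Rightarrow> nat \<Rightarrow> complex^'n^'n \<Rightarrow> complex^'n \<Rightarrow> complex^'n" where
  "poly_div_X_mult P k A v = (\<Sum>i<k. coeff P (Suc i) *s (mat_pow A i *v v))"

lemma poly_mat_eq_A_poly_div_X_mult:
  assumes "degree P \<le> k" "poly P 0 = 0"
  shows "poly_mat P A *v v = A *v poly_div_X_mult P k A v"
proof -
  have "poly_mat P A *v v = (\<Sum>d\<le>k. coeff P d *s (mat_pow A d *v v))"
    unfolding poly_mat_mult_vector using assms(1)
    by (intro sum.mono_neutral_left) (auto simp: coeff_eq_0)
  also have "\<dots> = (\<Sum>d<Suc k. coeff P d *s (mat_pow A d *v v))"
    by (simp add: lessThan_Suc_atMost)
  also have "\<dots> = (\<Sum>i<k. coeff P (Suc i) *s (mat_pow A (Suc i) *v v))"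
    using assms(2) unfolding sum.lessThan_Suc_shift by (simp add: poly_0_coeff_0)
  also have "\<dots> = A *v poly_div_X_mult P k A v"
    by (simp add: poly_div_X_mult_def matrix_vector_mult_sum vector_scalar_commute
        matrix_vector_mul_assoc)
  finally show ?thesis .
qed

lemma poly_div_X_mult_commute: "poly_div_X_mult P k A (A *v v) = A *v poly_div_X_mult P k A v"
proof -
  have "mat_pow A i *v (A *v v) = A *v (mat_pow A i *v v)" for i
    by (simp add: matrix_vector_mul_assoc mat_pow_commute)
  then show ?thesis
    by (simp add: poly_div_X_mult_def matrix_vector_mult_sum vector_scalar_commute)
qed

lemma krylov_affine_poly_step:
  fixes A :: "complex^'n^'n" and x xs y :: "complex^'n" and t :: real
  assumes deg: "degree P \<le> k" and P0: "poly P 0 = 0" and exact: "A *v xs = y"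
  defines "r \<equiv> residual A y x"
    and "z \<equiv> x + complex_of_real t *s poly_div_X_mult P k A (residual A y x)"
  shows "z \<in> krylov_affine A k x r"
    and "residual A y z = r - t *\<^sub>R (poly_mat P A *v r)"
    and "xs - z = (xs - x) - t *\<^sub>R (poly_mat P A *v (xs - x))"
proof -
  have "z = x + (\<Sum>i<k. (complex_of_real t * coeff P (Suc i)) *s (mat_pow A i *v r))"
    by (simp add: z_def r_def poly_div_X_mult_def vector_smult_sum vector_smult_assoc)
  then show "z \<in> krylov_affine A k x r"
    unfolding krylov_affine_def by (auto intro!: exI[of _ "\<lambda>i. complex_of_real t * coeff P (Suc i)"])
  have Az: "A *v z = A *v x + t *\<^sub>R (poly_mat P A *v r)"
    by (simp add: z_def r_def matrix_vector_right_distrib vector_scalar_commute scaleR_eq_of_real_smult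
        poly_mat_eq_A_poly_div_X_mult[OF deg P0])
  then show "residual A y z = r - t *\<^sub>R (poly_mat P A *v r)"
    by (simp add: residual_def r_def)
  have "r = A *v (xs - x)"
    by (simp add: r_def residual_def exact matrix_vector_mult_diff_distrib)
  then show "xs - z = (xs - x) - t *\<^sub>R (poly_mat P A *v (xs - x))"
    by (simp add: z_def r_def[symmetric] scaleR_eq_of_real_smult poly_div_X_mult_commute
        poly_mat_eq_A_poly_div_X_mult[OF deg P0])
qed

lemma krylov_affine_decline:
  fixes A :: "complex^'n^'n" and x xs y :: "complex^'n" and f :: "complex^'n \<Rightarrow> real"
  assumes deg: "degree P \<le> k" and P0: "poly P 0 = 0" and exact: "A *v xs = y"
    and contr: "\<And>v. \<exists>t::real. norm (v - t *\<^sub>R (poly_mat P A *v v)) \<le> \<rho> * norm v"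
    and crit: "f = (\<lambda>z. norm (residual A y z)) \<or> f = (\<lambda>z. norm (xs - z))"
  shows "\<exists>z\<in>krylov_affine A k x (residual A y x). f z \<le> \<rho> * f x"
proof -
  define z where "z t = x + complex_of_real t *s poly_div_X_mult P k A (residual A y x)" for t
  note step = krylov_affine_poly_step[OF deg P0 exact, of x, folded z_def]
  from crit show ?thesis
  proof
    assume f: "f = (\<lambda>z. norm (residual A y z))"
    obtain t where "norm (residual A y x - t *\<^sub>R (poly_mat P A *v residual A y x))
        \<le> \<rho> * norm (residual A y x)"
      using contr by blast
    then have "f (z t) \<le> \<rho> * f x" unfolding f step(2) .
    then show ?thesis using step(1) by blast
  next
    assume f: "f = (\<lambda>z. norm (xs - z))"
    obtain t where "norm ((xs - x) - t *\<^sub>R (poly_mat P A *v (xs - x))) \<le> \<rho> * norm (xs - x)"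
      using contr by blast
    then have "f (z t) \<le> \<rho> * f x" unfolding f step(3) .
    then show ?thesis using step(1) by blast
  qed
qed

lemma matrix_injective_of_poly_mat_injective:
  assumes deg: "degree P \<le> k" and P0: "poly P 0 = 0"
    and inj: "\<And>v. poly_mat P A *v v = 0 \<Longrightarrow> v = 0" and e: "A *v e = 0"
  shows "e = 0"
proof (rule inj)
  have "poly_div_X_mult P k A 0 = 0" by (simp add: poly_div_X_mult_def)
  then show "poly_mat P A *v e = 0"
    using e by (simp add: poly_mat_eq_A_poly_div_X_mult[OF deg P0] flip: poly_div_X_mult_commute)
qed

lemma tendsto_zero_of_matrix_injective:
  fixes A :: "complex^'n^'m" and e :: "nat \<Rightarrow> complex^'n"
  assumes inj: "\<And>v. A *v v = 0 \<Longrightarrow> v = 0" and lim: "(\<lambda>n. A *v e n) \<longlonglongrightarrow> 0"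
  shows "e \<longlonglongrightarrow> 0"
proof -
  obtain B where B: "B ** A = mat 1" using inj matrix_left_invertible_ker by blast
  have "(\<lambda>n. B *v (A *v e n)) \<longlonglongrightarrow> B *v 0"
    by (rule bounded_linear.tendsto[OF matrix_vector_mul_bounded_linear lim])
  then show ?thesis by (simp add: matrix_vector_mul_assoc B)
qed

lemma LIMSEQ_zero_of_contraction:
  fixes a :: "nat \<Rightarrow> real"
  assumes \<rho>: "0 \<le> \<rho>" "\<rho> < 1" and nonneg: "\<And>n. 0 \<le> a n"
    and contr: "\<And>n. a (Suc n) \<le> \<rho> * a n"
  shows "a \<longlonglongrightarrow> 0"
proof (rule tendsto_sandwich[of "\<lambda>_. 0" _ _ "\<lambda>n. \<rho> ^ n * a 0"])
  have "a n \<le> \<rho> ^ n * a 0" for n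
  proof (induction n)
    case (Suc n)
    have "a (Suc n) \<le> \<rho> * a n" by (rule contr)
    also have "\<dots> \<le> \<rho> * (\<rho> ^ n * a 0)" using Suc \<rho> by (intro mult_left_mono)
    finally show ?case by simp
  qed simp
  then show "\<forall>\<^sub>F n in sequentially. a n \<le> \<rho> ^ n * a 0" by simp
  show "(\<lambda>n. \<rho> ^ n * a 0) \<longlonglongrightarrow> 0"
    using \<rho> by (intro tendsto_mult_left_zero LIMSEQ_power_zero) auto
qed (use nonneg in auto)

theorem mainTheorem2:
  fixes A :: "complex^'n^'n" and y xs :: "complex^'n"
    and k m :: nat and P :: "complex poly"
    and x :: "int \<Rightarrow> complex^'n" and S :: "nat \<Rightarrow> (complex^'n) set"
    and f :: "complex^'n \<Rightarrow> real"
  assumes km: "k \<ge> 1" "m \<ge> 1"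
    and Pdeg: "degree P \<le> k" and P0: "poly P 0 = 0"
    and Hdef: "pos_definite (herm_part (poly_mat P A)) \<or> neg_definite (herm_part (poly_mat P A))"
    and exact: "A *v xs = y"
    and crit: "f = (\<lambda>z. norm (residual A y z)) \<or> f = (\<lambda>z. norm (xs - z))"
    and sel_oc: "\<forall>n::nat. S n \<subseteq> oc_span A y k m x (int n)"
    and sel_kr: "\<forall>n::nat. krylov_affine A k (x (int n)) (residual A y (x (int n))) \<subseteq> S n"
    and step: "\<forall>n::nat. x (int n + 1) \<in> S n \<and> (\<forall>z\<in>S n. f (x (int n + 1)) \<le> f z)"
  defines "\<rho> \<equiv> sqrt (1 - (Inf (cmod ` eigenvalues (herm_part (poly_mat P A)))
                           / mat_norm2 (poly_mat P A))\<^sup>2)"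
  shows "\<rho> < 1 \<and> (\<forall>n::nat. f (x (int n + 1)) \<le> \<rho> * f (x (int n)))
         \<and> (\<lambda>n::nat. x (int n)) \<longlonglongrightarrow> xs"
proof -
  note contraction = herm_part_definite_contraction[OF Hdef, folded \<rho>_def]
  have decline: "f (x (int n + 1)) \<le> \<rho> * f (x (int n))" for n
  proof -
    obtain z where "z \<in> S n" "f z \<le> \<rho> * f (x (int n))"
      using krylov_affine_decline[OF Pdeg P0 exact contraction(3) crit] sel_kr by blast
    then show ?thesis using step by force
  qed
  have lim: "(\<lambda>n. f (x (int n))) \<longlonglongrightarrow> 0"
    using contraction(1,2) crit decline by (intro LIMSEQ_zero_of_contraction) (auto simp: add.commute)
  from crit have "(\<lambda>n. xs - x (int n)) \<longlonglongrightarrow> 0"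
  proof
    assume "f = (\<lambda>z. norm (residual A y z))"
    with lim have "(\<lambda>n. A *v (xs - x (int n))) \<longlonglongrightarrow> 0"
      by (simp add: tendsto_norm_zero_iff residual_def exact matrix_vector_mult_diff_distrib)
    with matrix_injective_of_poly_mat_injective[OF Pdeg P0 contraction(4)]
    show ?thesis by (rule tendsto_zero_of_matrix_injective)
  qed (use lim in \<open>simp add: tendsto_norm_zero_iff\<close>)
  then have "(\<lambda>n. xs - (xs - x (int n))) \<longlonglongrightarrow> xs - 0"
    by (intro tendsto_diff tendsto_const)
  then have "(\<lambda>n. x (int n)) \<longlonglongrightarrow> xs" by simp
  then show ?thesis using contraction(2) decline by blast
qed

end
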